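(* Let $\mathcal{H}$ be a finite-dimensional Hilbert space, $P$ an orthogonal projection (the codespace projection), $Q = 1-P$, and let $\{F^\ell\}$ be operators with $F^\ell = PF^\ell Q$ such that $\sum_\ell F^{\ell\dagger}F^\ell = Q$ (so that $\mathcal{R}(\cdot) = \sum_\ell F^\ell(\cdot)F^{\ell\dagger}$ is a recovery channel from operators supported on the range of $Q$ into operators supported on the range of $P$), and such that for every $\ell,\ell'$: (i) $F^\ell (F^{\ell\dagger}F^\ell)^{-1}F^{\ell\dagger} = P$, and (ii) $F^\ell F^{\ell'\dagger} = \delta_{\ell\ell'}F^\ell F^{\ell\dagger}$. Let $\mathcal{L} = \sum_\ell \mathcal{D}[F^\ell]$ (the continuous recovery $\mathcal{R} - \mathcal{I}$ with the identity Kraus operator on the codespace removed), and assume $\mathcal{L}$ has the unique decoherence-free subspace with projection $P$. Consider small miscalibrations $F^\ell \to F^\ell + f^\ell$ (no Hamiltonian perturbation), where the operators $f^\ell_{\mathrm{ll}} = Qf^\ell P$ form a noise channel $\mathcal{E}(\cdot) = \sum_\ell f^\ell_{\mathrm{ll}}(\cdot)f^{\ell\dagger}_{\mathrm{ll}}$ correctable by $\mathcal{R}$, i.e. $\mathcal{R}\mathcal{E}(\rho) \propto \rho$ for all $\rho = P\rho P$. Then, to leading order, the miscalibrations induce no evolution within the codespace: $\mathcal{L}_{\mathrm{eff}}(\rho) = 0$ for all $\rho = P\rho P$.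
   Context: $\mathcal{D}[F](\rho) = F\rho F^\dagger - \tfrac12\{F^\dagger F,\rho\}$. $(F^{\ell\dagger}F^\ell)^{-1}$ denotes the inverse on its support (Moore–Penrose pseudoinverse). The effective generator is $\mathcal{L}_{\mathrm{eff}} = \mathcal{P}_\infty\mathcal{O}\mathcal{P}_\infty - \mathcal{P}_\infty\mathcal{O}_1\mathcal{L}^{-1}\mathcal{O}_1\mathcal{P}_\infty$, where $\mathcal{O} = \sum_\ell(\mathcal{D}[F^\ell+f^\ell] - \mathcal{D}[F^\ell])$, $\mathcal{O}_1(\rho) = \sum_\ell\big(F^\ell\rho f^{\ell\dagger} + f^\ell\rho F^{\ell\dagger} - \tfrac12\{F^{\ell\dagger}f^\ell + f^{\ell\dagger}F^\ell,\rho\}\big)$ is the part of $\mathcal{O}$ linear in the $f^\ell$, $\mathcal{L}^{-1}$ is the Drazin pseudoinverse of $\mathcal{L}$, and $\mathcal{P}_\infty = \mathcal{I} - \mathcal{L}\mathcal{L}^{-1} = \lim_{t\to\infty}e^{t\mathcal{L}}$ is the projection onto the steady states of $\mathcal{L}$. *)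

theory Defs
  imports "HOL-Analysis.Analysis"
begin

type_synonym 'n cmat = "complex^'n^'n"

definition adj :: "'n::finite cmat \<Rightarrow> 'n cmat" where
  "adj A = (\<chi> i j. cnj (A $ j $ i))"

definition cscale :: "complex \<Rightarrow> 'n::finite cmat \<Rightarrow> 'n cmat" where
  "cscale c A = (\<chi> i j. c * A $ i $ j)"

definition mp_pinv :: "'n::finite cmat \<Rightarrow> 'n cmat" where
  "mp_pinv A = (THE X. A ** X ** A = A \<and> X ** A ** X = X \<and>
                       adj (A ** X) = A ** X \<and> adj (X ** A) = X ** A)"

definition dissipator :: "'n::finite cmat \<Rightarrow> 'n cmat \<Rightarrow> 'n cmat" where
  "dissipator F \<rho> = F ** \<rho> ** adj F
      - scaleR (1/2) (adj F ** F ** \<rho> + \<rho> ** (adj F ** F))"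

text \<open>Drazin pseudoinverse of a superoperator (unique in any semigroup).\<close>
definition drazin_inv :: "('a \<Rightarrow> 'a) \<Rightarrow> ('a \<Rightarrow> 'a)" where
  "drazin_inv L = (THE D. D \<circ> L \<circ> D = D \<and> L \<circ> D = D \<circ> L \<and>
                          (\<exists>k::nat. (L ^^ Suc k) \<circ> D = L ^^ k))"

definition P_inf :: "('n::finite cmat \<Rightarrow> 'n cmat) \<Rightarrow> 'n cmat \<Rightarrow> 'n cmat" where
  "P_inf L \<rho> = \<rho> - L (drazin_inv L \<rho>)"

definition lindbladian :: "'l set \<Rightarrow> ('l \<Rightarrow> 'n::finite cmat) \<Rightarrow> 'n cmat \<Rightarrow> 'n cmat" where
  "lindbladian I F \<rho> = (\<Sum>l\<in>I. dissipator (F l) \<rho>)"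

definition recovery :: "'l set \<Rightarrow> ('l \<Rightarrow> 'n::finite cmat) \<Rightarrow> 'n cmat \<Rightarrow> 'n cmat" where
  "recovery I F \<rho> = (\<Sum>l\<in>I. F l ** \<rho> ** adj (F l))"

definition pertO :: "'l set \<Rightarrow> ('l \<Rightarrow> 'n::finite cmat) \<Rightarrow> ('l \<Rightarrow> 'n cmat) \<Rightarrow> 'n cmat \<Rightarrow> 'n cmat" where
  "pertO I F f \<rho> = (\<Sum>l\<in>I. dissipator (F l + f l) \<rho> - dissipator (F l) \<rho>)"

text \<open>O_1: the part of O linear in the f.\<close>
definition pertO1 :: "'l set \<Rightarrow> ('l \<Rightarrow> 'n::finite cmat) \<Rightarrow> ('l \<Rightarrow> 'n cmat) \<Rightarrow> 'n cmat \<Rightarrow> 'n cmat" where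
  "pertO1 I F f \<rho> = (\<Sum>l\<in>I. F l ** \<rho> ** adj (f l) + f l ** \<rho> ** adj (F l)
      - scaleR (1/2) ((adj (F l) ** f l + adj (f l) ** F l) ** \<rho>
                      + \<rho> ** (adj (F l) ** f l + adj (f l) ** F l)))"

definition L_eff :: "'l set \<Rightarrow> ('l \<Rightarrow> 'n::finite cmat) \<Rightarrow> ('l \<Rightarrow> 'n cmat) \<Rightarrow> 'n cmat \<Rightarrow> 'n cmat" where
  "L_eff I F f \<rho> =
     (let L = lindbladian I F; Pi = P_inf L
      in Pi (pertO I F f (Pi \<rho>)) - Pi (pertO1 I F f (drazin_inv L (pertO1 I F f (Pi \<rho>)))))"

end

theory Submission
  imports Defs
begin

(* On a codespace operator rho the effective generator works out to
   L_eff rho = R (E rho) - 1/2 (M rho + rho M), where E is the noise channel of the leakage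
   parts f_ll = Q f P and M = sum_l f_ll^dag f_ll.  This needs the Drazin inverse of L and
   P_inf X = P X P + R X, both explicit because L acts blockwise with respect to P and Q.
   Correctability makes R E act on the codespace as one scalar c, and taking traces turns this
   into the Knill--Laflamme condition M = c P; hence both terms equal c rho and cancel. *)

section \<open>Uniqueness of the Drazin inverse\<close>

lemma drazin_pow_left:
  fixes L D :: "'a \<Rightarrow> 'a"
  assumes "D \<circ> L \<circ> D = D" and "L \<circ> D = D \<circ> L"
  shows "D ^^ Suc n \<circ> L ^^ n = D"
proof (induction n)
  case (Suc n)
  have "D \<circ> D \<circ> L = D"
    using assms by (metis comp_assoc)
  have "D ^^ Suc (Suc n) \<circ> L ^^ Suc n = D ^^ n \<circ> (D \<circ> D \<circ> L) \<circ> L ^^ n"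
    by (simp only: funpow_Suc_right[of _ D] funpow.simps(2)[of _ L] comp_assoc)
  also have "\<dots> = D ^^ Suc n \<circ> L ^^ n"
    using \<open>D \<circ> D \<circ> L = D\<close> by (simp only: funpow_Suc_right)
  also have "\<dots> = D"
    by (fact Suc.IH)
  finally show ?case .
qed simp

lemma drazin_pow_right:
  fixes L D :: "'a \<Rightarrow> 'a"
  assumes "D \<circ> L \<circ> D = D" and "L \<circ> D = D \<circ> L"
  shows "L ^^ n \<circ> D ^^ Suc n = D"
proof (induction n)
  case (Suc n)
  have "L \<circ> D \<circ> D = D"
    using assms by metis
  have "L ^^ Suc n \<circ> D ^^ Suc (Suc n) = L ^^ n \<circ> (L \<circ> D \<circ> D) \<circ> D ^^ n"
    by (simp only: funpow_Suc_right[of _ L] funpow.simps(2)[of _ D] comp_assoc)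
  also have "\<dots> = L ^^ n \<circ> D ^^ Suc n"
    using \<open>L \<circ> D \<circ> D = D\<close> by (simp only: funpow.simps(2) comp_assoc)
  also have "\<dots> = D"
    by (fact Suc.IH)
  finally show ?case .
qed simp

lemma comp_funpow_commute:
  fixes L D :: "'a \<Rightarrow> 'a"
  assumes "L \<circ> D = D \<circ> L"
  shows "L ^^ n \<circ> D = D \<circ> L ^^ n"
proof (induction n)
  case (Suc n)
  have "L ^^ Suc n \<circ> D = L \<circ> (L ^^ n \<circ> D)"
    by (simp only: funpow.simps(2) comp_assoc)
  also have "\<dots> = (L \<circ> D) \<circ> L ^^ n"
    using Suc by (simp only: comp_assoc)
  finally show ?case
    using assms by (simp only: funpow.simps(2) comp_assoc)
qed simp

lemma drazin_index_mono:
  fixes L D :: "'a \<Rightarrow> 'a"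
  assumes "L ^^ Suc k \<circ> D = L ^^ k" and "k \<le> m"
  shows "L ^^ Suc m \<circ> D = L ^^ m"
  using assms(2)
proof (induction m rule: dec_induct)
  case (step m)
  have "L ^^ Suc (Suc m) \<circ> D = L \<circ> (L ^^ Suc m \<circ> D)"
    by (simp only: funpow.simps(2)[of "Suc m"] comp_assoc)
  also have "\<dots> = L ^^ Suc m"
    using step.IH by (simp only: funpow.simps(2))
  finally show ?case .
qed (fact assms(1))

lemma drazin_absorb:
  fixes L D D' :: "'a \<Rightarrow> 'a"
  assumes "D \<circ> L \<circ> D = D" and "L \<circ> D = D \<circ> L"
    and "L \<circ> D' = D' \<circ> L" and "L ^^ Suc m \<circ> D' = L ^^ m"
  shows "D \<circ> L \<circ> D' = D" and "D' \<circ> L \<circ> D = D"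
proof -
  have left: "D ^^ Suc m \<circ> L ^^ m = D" and right: "L ^^ m \<circ> D ^^ Suc m = D"
    using drazin_pow_left drazin_pow_right assms(1,2) by blast+
  have "D \<circ> L \<circ> D' = (D ^^ Suc m \<circ> L ^^ m) \<circ> L \<circ> D'"
    using left by (simp only:)
  also have "\<dots> = D ^^ Suc m \<circ> (L ^^ Suc m \<circ> D')"
    by (simp only: funpow_Suc_right[of m L] comp_assoc)
  also have "\<dots> = D"
    using assms(4) left by (simp only:)
  finally show "D \<circ> L \<circ> D' = D" .
  have "D' \<circ> L \<circ> D = D' \<circ> L \<circ> (L ^^ m \<circ> D ^^ Suc m)"
    using right by (simp only:)
  also have "\<dots> = (D' \<circ> L ^^ Suc m) \<circ> D ^^ Suc m"
    by (simp only: funpow.simps(2)[of m L] comp_assoc)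
  also have "\<dots> = D"
    using assms(4) right comp_funpow_commute[OF assms(3), of "Suc m"] by (simp only:)
  finally show "D' \<circ> L \<circ> D = D" .
qed

lemma drazin_unique:
  fixes L D D' :: "'a \<Rightarrow> 'a"
  assumes "D \<circ> L \<circ> D = D" "L \<circ> D = D \<circ> L" "L ^^ Suc k \<circ> D = L ^^ k"
    and "D' \<circ> L \<circ> D' = D'" "L \<circ> D' = D' \<circ> L" "L ^^ Suc k' \<circ> D' = L ^^ k'"
  shows "D = D'"
proof -
  have "L ^^ Suc (k + k') \<circ> D = L ^^ (k + k')" "L ^^ Suc (k + k') \<circ> D' = L ^^ (k + k')"
    by (rule drazin_index_mono[OF assms(3)], simp) (rule drazin_index_mono[OF assms(6)], simp)
  then have "D \<circ> L \<circ> D' = D" "D \<circ> L \<circ> D' = D'"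
    using drazin_absorb assms(1,2,4,5) by blast+
  then show ?thesis
    by simp
qed

lemma drazin_inv_eqI:
  assumes "D \<circ> L \<circ> D = D" "L \<circ> D = D \<circ> L" "L ^^ Suc k \<circ> D = L ^^ k"
  shows "drazin_inv L = D"
  unfolding drazin_inv_def
  by (rule the_equality) (use assms drazin_unique[OF _ _ _ assms] in blast)+

section \<open>Complex matrices\<close>

lemma matrix_mul_eq_nested: "A ** B = C \<Longrightarrow> A ** (B ** X) = C ** X"
  by (simp add: matrix_mul_assoc)

lemma matrix_add_rdistrib: "(A + B) ** C = A ** C + B ** (C :: 'a::semiring_1^'p^'n)"
  by (simp add: matrix_matrix_mult_def vec_eq_iff sum.distrib distrib_right)

lemma matrix_diff_rdistrib: "(A - B) ** C = A ** C - B ** (C :: 'a::ring_1^'p^'n)"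
  by (simp add: matrix_matrix_mult_def vec_eq_iff sum_subtractf left_diff_distrib)

lemma matrix_diff_ldistrib: "C ** (A - B) = C ** A - C ** (B :: 'a::ring_1^'p^'n)"
  by (simp add: matrix_matrix_mult_def vec_eq_iff sum_subtractf right_diff_distrib)

lemma matrix_minus_left: "(- A) ** C = - (A ** (C :: 'a::ring_1^'p^'n))"
  by (simp add: matrix_matrix_mult_def vec_eq_iff sum_negf)

lemma matrix_minus_right: "C ** (- A) = - (C ** (A :: 'a::ring_1^'p^'n))"
  by (simp add: matrix_matrix_mult_def vec_eq_iff sum_negf)

lemma matrix_scaleR_left: "(r *\<^sub>R A) ** C = r *\<^sub>R (A ** (C :: 'a::real_algebra_1^'p^'n))"
  by (simp add: scalar_matrix_assoc)

lemma matrix_scaleR_right: "C ** (r *\<^sub>R A) = r *\<^sub>R (C ** (A :: 'a::real_algebra_1^'p^'n))"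
  by (simp add: matrix_scalar_ac scalar_matrix_assoc)

lemma matrix_sum_left: "sum f S ** (C :: 'a::semiring_1^'p^'n) = (\<Sum>x\<in>S. f x ** C)"
  by (induction S rule: infinite_finite_induct) (simp_all add: matrix_add_rdistrib)

lemma matrix_sum_right: "(C :: 'a::semiring_1^'n^'m) ** sum f S = (\<Sum>x\<in>S. C ** f x)"
  by (induction S rule: infinite_finite_induct) (simp_all add: matrix_add_ldistrib)

lemma matrix_cscale_left: "cscale c A ** C = cscale c (A ** (C :: 'n::finite cmat))"
  by (simp add: cscale_def matrix_matrix_mult_def vec_eq_iff sum_distrib_left mult.assoc)

lemma matrix_cscale_right: "C ** cscale c A = cscale c (C ** (A :: 'n::finite cmat))"
  by (simp add: cscale_def matrix_matrix_mult_def vec_eq_iff sum_distrib_left mult_ac)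

lemmas matrix_mul_simps = matrix_mul_assoc[symmetric] matrix_add_ldistrib matrix_add_rdistrib
  matrix_diff_ldistrib matrix_diff_rdistrib matrix_minus_left matrix_minus_right
  matrix_scaleR_left matrix_scaleR_right matrix_cscale_left matrix_cscale_right
  matrix_sum_left matrix_sum_right

lemma adj_adj [simp]: "adj (adj A) = A"
  by (simp add: adj_def vec_eq_iff)

lemma adj_matrix_mul: "adj (A ** B) = adj B ** adj (A :: 'n::finite cmat)"
  by (simp add: adj_def matrix_matrix_mult_def vec_eq_iff mult.commute)

lemma adj_add: "adj (A + B) = adj A + adj (B :: 'n::finite cmat)"
  by (simp add: adj_def vec_eq_iff)

lemma adj_diff: "adj (A - B) = adj A - adj (B :: 'n::finite cmat)"
  by (simp add: adj_def vec_eq_iff)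

lemma adj_zero [simp]: "adj (0 :: 'n::finite cmat) = 0"
  by (simp add: adj_def vec_eq_iff)

lemma adj_sum: "adj (sum f S) = (\<Sum>x\<in>S. adj (f x :: 'n::finite cmat))"
  by (induction S rule: infinite_finite_induct) (simp_all add: adj_add)

lemma adj_mat_1: "adj (mat 1) = (mat 1 :: 'n::finite cmat)"
  by (simp add: adj_def mat_def vec_eq_iff)

lemmas adj_simps = adj_matrix_mul adj_add adj_diff adj_sum adj_mat_1

lemma cscale_cscale: "cscale a (cscale b A) = cscale (a * b) (A :: 'n::finite cmat)"
  by (simp add: cscale_def vec_eq_iff)

lemma cscale_0_left: "cscale 0 (A :: 'n::finite cmat) = 0"
  by (simp add: cscale_def vec_eq_iff)

lemma cscale_1_left: "cscale 1 (A :: 'n::finite cmat) = A"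
  by (simp add: cscale_def vec_eq_iff)

lemma cscale_eq_0_iff: "cscale c (A :: 'n::finite cmat) = 0 \<longleftrightarrow> c = 0 \<or> A = 0"
  by (auto simp: cscale_def vec_eq_iff)

lemma trace_sum: "trace (sum f S) = (\<Sum>x\<in>S. trace (f x :: 'a::semiring_1^'n^'n))"
  by (induction S rule: infinite_finite_induct) (simp_all add: trace_def sum.distrib)

lemma trace_cscale: "trace (cscale c (A :: 'n::finite cmat)) = c * trace A"
  by (simp add: trace_def cscale_def sum_distrib_left)

lemma trace_mul_adj_eq_0_iff: "trace (A ** adj A) = 0 \<longleftrightarrow> A = (0 :: 'n::finite cmat)"
proof
  assume "trace (A ** adj A) = 0"
  moreover have "trace (A ** adj A) = of_real (\<Sum>i\<in>UNIV. \<Sum>k\<in>UNIV. (cmod (A $ i $ k))\<^sup>2)"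
    by (simp add: trace_def matrix_matrix_mult_def adj_def flip: complex_norm_square)
  ultimately have "(\<Sum>i\<in>UNIV. \<Sum>k\<in>UNIV. (cmod (A $ i $ k))\<^sup>2) = 0"
    by (metis of_real_eq_0_iff)
  then have "\<forall>i k. (cmod (A $ i $ k))\<^sup>2 = 0"
    by (simp add: sum_nonneg sum_nonneg_eq_0_iff)
  then show "A = 0"
    by (simp add: vec_eq_iff)
qed (simp add: trace_def)

lemma mp_pinv_unique:
  fixes A X Y :: "'n::finite cmat"
  assumes X: "A ** X ** A = A" "X ** A ** X = X" "adj (A ** X) = A ** X" "adj (X ** A) = X ** A"
    and Y: "A ** Y ** A = A" "Y ** A ** Y = Y" "adj (A ** Y) = A ** Y" "adj (Y ** A) = Y ** A"
  shows "X = Y"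
proof -
  have adj_A: "adj A = adj A ** adj X ** adj A" "adj A = adj A ** adj Y ** adj A"
    using arg_cong[OF X(1), of adj] arg_cong[OF Y(1), of adj]
    by (simp_all add: adj_matrix_mul matrix_mul_assoc)
  have "X = X ** adj (A ** X)"
    using X(2,3) by (simp add: matrix_mul_assoc)
  also have "\<dots> = X ** adj X ** (adj A ** adj Y ** adj A)"
    using adj_A(2) by (simp add: adj_matrix_mul matrix_mul_assoc)
  also have "\<dots> = (X ** adj (A ** X)) ** adj (A ** Y)"
    by (simp add: adj_matrix_mul matrix_mul_assoc)
  also have "\<dots> = X ** A ** Y"
    using X(2,3) Y(3) by (simp add: matrix_mul_assoc)
  finally have "X = X ** A ** Y" .
  have "Y = adj (Y ** A) ** Y"
    using Y(2,4) by simp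
  also have "\<dots> = (adj A ** adj X ** adj A) ** adj Y ** Y"
    using adj_A(1) by (simp add: adj_matrix_mul matrix_mul_assoc)
  also have "\<dots> = adj (X ** A) ** (adj (Y ** A) ** Y)"
    by (simp add: adj_matrix_mul matrix_mul_assoc)
  also have "\<dots> = X ** A ** Y"
    using X(4) Y(2,4) by (simp add: matrix_mul_assoc)
  finally show "X = Y"
    using \<open>X = X ** A ** Y\<close> by (simp only:)
qed

lemma mp_pinv_eqI:
  fixes A X :: "'n::finite cmat"
  assumes "A ** X ** A = A" "X ** A ** X = X" "adj (A ** X) = A ** X" "adj (X ** A) = X ** A"
  shows "mp_pinv A = X"
  unfolding mp_pinv_def
  by (rule the_equality) (use assms mp_pinv_unique[of A _ X] in blast)+

lemma mp_pinv_orthogonal_projection: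
  fixes G :: "'n::finite cmat"
  assumes "G ** G = G" and "adj G = G"
  shows "mp_pinv G = G"
  by (rule mp_pinv_eqI) (simp_all add: assms)

lemma recovery_add: "recovery I G (X + Y) = recovery I G X + recovery I G Y"
  by (simp add: recovery_def matrix_mul_simps sum.distrib)

lemma recovery_diff: "recovery I G (X - Y) = recovery I G X - recovery I G Y"
  by (simp add: recovery_def matrix_mul_simps sum_subtractf)

lemma recovery_uminus: "recovery I G (- X) = - recovery I G X"
  by (simp add: recovery_def matrix_mul_simps sum_negf)

lemma recovery_scaleR: "recovery I G (r *\<^sub>R X) = r *\<^sub>R recovery I G X"
  by (simp add: recovery_def matrix_mul_simps scaleR_sum_right)

lemma recovery_cscale: "recovery I G (cscale c X) = cscale c (recovery I G X)"
proof -
  have "recovery I G (cscale c X) = (\<Sum>l\<in>I. cscale c (G l ** X ** adj (G l)))"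
    by (simp add: recovery_def matrix_cscale_left matrix_cscale_right)
  then show ?thesis
    by (simp add: recovery_def cscale_def vec_eq_iff sum_component sum_distrib_left)
qed

lemma recovery_zero: "recovery I G 0 = 0"
  by (simp add: recovery_def)

lemmas recovery_linear = recovery_add recovery_diff recovery_uminus recovery_scaleR recovery_zero

lemma trace_recovery: "trace (recovery I G X) = trace ((\<Sum>l\<in>I. adj (G l) ** G l) ** X)"
proof -
  have "trace (G l ** X ** adj (G l)) = trace (adj (G l) ** G l ** X)" for l
    by (metis trace_mul_sym matrix_mul_assoc)
  then show ?thesis
    by (simp add: recovery_def trace_sum matrix_sum_left)
qed

lemma all_eigenvectors_imp_scalar:
  fixes P :: "'n::finite cmat" and \<Phi> :: "'n cmat \<Rightarrow> 'n cmat"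
  assumes P_idem: "P ** P = P"
    and additive: "\<And>X Y. \<Phi> (X + Y) = \<Phi> X + \<Phi> Y"
    and homogeneous: "\<And>c X. \<Phi> (cscale c X) = cscale c (\<Phi> X)"
    and eigen: "\<forall>\<sigma>. \<sigma> = P ** \<sigma> ** P \<longrightarrow> (\<exists>c. \<Phi> \<sigma> = cscale c \<sigma>)"
  shows "\<exists>c. \<forall>\<sigma>. \<sigma> = P ** \<sigma> ** P \<longrightarrow> \<Phi> \<sigma> = cscale c \<sigma>"
proof -
  obtain c where c: "\<Phi> P = cscale c P"
    using eigen P_idem by (metis matrix_mul_assoc)
  have "\<Phi> \<sigma> = cscale c \<sigma>" if \<sigma>: "\<sigma> = P ** \<sigma> ** P" for \<sigma>
  proof -
    obtain a where a: "\<Phi> \<sigma> = cscale a \<sigma>"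
      using eigen \<sigma> by blast
    have "P + \<sigma> = P ** (P + \<sigma>) ** P"
      using \<sigma> P_idem by (metis matrix_add_ldistrib matrix_add_rdistrib matrix_mul_assoc)
    then obtain d where "\<Phi> (P + \<sigma>) = cscale d (P + \<sigma>)"
      using eigen by blast
    then have "cscale d (P + \<sigma>) = cscale c P + cscale a \<sigma>"
      using a c additive by simp
    then have dependence: "cscale (d - c) P = cscale (a - d) \<sigma>"
      by (simp add: cscale_def vec_eq_iff algebra_simps)
    show ?thesis
    proof (cases "a = d")
      case True
      then have "d = c \<or> P = 0"
        using dependence by (simp add: cscale_eq_0_iff cscale_0_left)
      moreover have "P = 0 \<Longrightarrow> \<sigma> = 0"
        using \<sigma> by simp
      ultimately show ?thesis
        using a True by (auto simp: cscale_def vec_eq_iff)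
    next
      case False
      then have "\<sigma> = cscale ((d - c) / (a - d)) P"
        using arg_cong[OF dependence, of "cscale (1 / (a - d))"]
        by (simp add: cscale_cscale cscale_1_left)
      then show ?thesis
        using c homogeneous by (simp add: cscale_cscale mult.commute)
    qed
  qed
  then show ?thesis
    by blast
qed

section \<open>The recovery generator\<close>

locale code_recovery =
  fixes P Q :: "'n::finite cmat" and I :: "'l set" and F :: "'l \<Rightarrow> 'n cmat"
  assumes finite_I: "finite I"
    and P_idem: "P ** P = P" and adj_P: "adj P = P" and Q_def: "Q = mat 1 - P"
    and F_block: "\<And>l. l \<in> I \<Longrightarrow> F l = P ** F l ** Q"
    and sum_adj_F_F: "(\<Sum>l\<in>I. adj (F l) ** F l) = Q"
    and F_pinv: "\<And>l. l \<in> I \<Longrightarrow> F l ** mp_pinv (adj (F l) ** F l) ** adj (F l) = P"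
    and F_orth: "\<And>l l'. l \<in> I \<Longrightarrow> l' \<in> I \<Longrightarrow> l \<noteq> l' \<Longrightarrow> F l ** adj (F l') = 0"
begin

abbreviation R where "R \<equiv> recovery I F"

abbreviation L where "L \<equiv> lindbladian I F"

lemma P_plus_Q: "P + Q = mat 1"
  by (simp add: Q_def)

lemma Q_idem: "Q ** Q = Q"
  by (simp add: Q_def matrix_diff_ldistrib matrix_diff_rdistrib P_idem)

lemma P_Q: "P ** Q = 0"
  by (simp add: Q_def matrix_diff_ldistrib P_idem)

lemma Q_P: "Q ** P = 0"
  by (simp add: Q_def matrix_diff_rdistrib P_idem)

lemma adj_Q: "adj Q = Q"
  by (simp add: Q_def adj_diff adj_mat_1 adj_P)

context
  fixes l assumes l: "l \<in> I"
begin

lemma P_F: "P ** F l = F l"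
  by (subst (1 2) F_block[OF l]) (simp add: matrix_mul_assoc P_idem)

lemma F_Q: "F l ** Q = F l"
  by (subst (1 2) F_block[OF l]) (simp flip: matrix_mul_assoc add: Q_idem)

lemma F_P: "F l ** P = 0"
  by (subst F_block[OF l]) (simp flip: matrix_mul_assoc add: Q_P)

lemma Q_F: "Q ** F l = 0"
  by (subst F_block[OF l]) (simp add: matrix_mul_assoc Q_P)

lemma adj_F_P: "adj (F l) ** P = adj (F l)"
  using arg_cong[OF P_F, of adj] by (simp add: adj_matrix_mul adj_P)

lemma Q_adj_F: "Q ** adj (F l) = adj (F l)"
  using arg_cong[OF F_Q, of adj] by (simp add: adj_matrix_mul adj_Q)

lemma P_adj_F: "P ** adj (F l) = 0"
  using arg_cong[OF F_P, of adj] by (simp add: adj_matrix_mul adj_P)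

lemma adj_F_Q: "adj (F l) ** Q = 0"
  using arg_cong[OF Q_F, of adj] by (simp add: adj_matrix_mul adj_Q)

lemma sum_F_adj_F_eq: "(\<Sum>l'\<in>I. F l ** adj (F l') ** X l') = F l ** adj (F l) ** X l"
proof -
  have "(\<Sum>l'\<in>I - {l}. F l ** adj (F l') ** X l') = 0"
  proof (intro sum.neutral ballI)
    fix l' assume "l' \<in> I - {l}"
    then show "F l ** adj (F l') ** X l' = 0"
      using F_orth[OF l, of l'] by auto
  qed
  then show ?thesis
    using sum.remove[OF finite_I l, of "\<lambda>l'. F l ** adj (F l') ** X l'"] by simp
qed

lemma F_adj_F_F: "F l ** adj (F l) ** F l = F l"
proof -
  have "F l = F l ** (\<Sum>l'\<in>I. adj (F l') ** F l')"
    by (simp add: sum_adj_F_F F_Q)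
  also have "\<dots> = F l ** adj (F l) ** F l"
    by (simp add: matrix_sum_right matrix_mul_assoc sum_F_adj_F_eq)
  finally show ?thesis
    by (rule sym)
qed

text \<open>By orthogonality and the sum rule \<open>F\<^sup>\<dagger> F\<close> is a projection, so it is its own
  pseudoinverse in the hypothesis \<open>F_pinv\<close>.\<close>
lemma F_adj_F: "F l ** adj (F l) = P"
proof -
  have "adj (F l) ** F l ** (adj (F l) ** F l) = adj (F l) ** F l"
    by (metis F_adj_F_F matrix_mul_assoc)
  then have "mp_pinv (adj (F l) ** F l) = adj (F l) ** F l"
    by (rule mp_pinv_orthogonal_projection) (simp add: adj_matrix_mul)
  then have "P = (F l ** adj (F l) ** F l) ** adj (F l)"
    using F_pinv[OF l] by (simp add: matrix_mul_assoc)
  also have "\<dots> = F l ** adj (F l)"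
    by (simp only: F_adj_F_F)
  finally show ?thesis
    by (rule sym)
qed

end

lemma F_F: "l \<in> I \<Longrightarrow> l' \<in> I \<Longrightarrow> F l ** F l' = 0"
  by (metis P_F F_P matrix_mul_assoc times0_left)

lemma adj_F_adj_F: "l \<in> I \<Longrightarrow> l' \<in> I \<Longrightarrow> adj (F l') ** adj (F l) = 0"
  by (metis F_F adj_matrix_mul adj_zero)

lemmas block_eqs = P_idem Q_idem P_Q Q_P P_F F_Q F_P Q_F adj_F_P Q_adj_F P_adj_F adj_F_Q
  F_F adj_F_adj_F F_adj_F

lemmas block_simps = block_eqs block_eqs[THEN matrix_mul_eq_nested]

lemma recovery_P_left: "R (P ** X) = 0"
  and recovery_P_right: "R (X ** P) = 0"
  and recovery_Q_left: "R (Q ** X) = R X"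
  and recovery_Q_right: "R (X ** Q) = R X"
  by (simp_all add: recovery_def matrix_mul_simps block_simps)

lemma P_recovery: "P ** R X = R X"
  and recovery_P: "R X ** P = R X"
  and Q_recovery: "Q ** R X = 0"
  and recovery_Q: "R X ** Q = 0"
  by (simp_all add: recovery_def matrix_mul_simps block_simps)

lemma recovery_recovery: "R (R X) = 0"
  by (metis P_recovery recovery_P_left)

lemmas recovery_simps = recovery_linear recovery_P_left recovery_P_right recovery_Q_left
  recovery_Q_right P_recovery recovery_P Q_recovery recovery_Q recovery_recovery
  P_recovery[THEN matrix_mul_eq_nested] recovery_P[THEN matrix_mul_eq_nested]
  Q_recovery[THEN matrix_mul_eq_nested] recovery_Q[THEN matrix_mul_eq_nested]

lemma block_decomposition: "X = P ** X ** P + P ** X ** Q + Q ** X ** P + Q ** X ** Q"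
proof -
  have "X = (P + Q) ** X ** (P + Q)"
    by (simp add: P_plus_Q)
  then show ?thesis
    by (simp add: matrix_add_ldistrib matrix_add_rdistrib algebra_simps)
qed

lemma lindbladian_blocks: "L X = R X - Q ** X ** Q - (1/2) *\<^sub>R (P ** X ** Q + Q ** X ** P)"
proof -
  have "L X = R X - (1/2) *\<^sub>R ((\<Sum>l\<in>I. adj (F l) ** F l) ** X + X ** (\<Sum>l\<in>I. adj (F l) ** F l))"
    by (simp add: lindbladian_def dissipator_def recovery_def sum_subtractf scaleR_sum_right
        sum.distrib scaleR_right_distrib matrix_sum_left matrix_sum_right)
  also have "\<dots> = R X - (1/2) *\<^sub>R ((P + Q) ** X ** Q + Q ** X ** (P + Q))"
    by (simp add: sum_adj_F_F P_plus_Q)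
  finally show ?thesis
    by (simp add: matrix_add_ldistrib matrix_add_rdistrib algebra_simps)
qed

text \<open>On the blocks \<open>PXP\<close>, \<open>PXQ + QXP\<close> and \<open>QXQ\<close> the generator acts as \<open>0\<close>, \<open>-1/2\<close> and
  \<open>R - 1\<close>, where \<open>R\<close> maps the \<open>QXQ\<close> block into the \<open>PXP\<close> block; inverting it on the last two
  blocks gives a Drazin inverse of index 1.\<close>
lemma drazin_inv_lindbladian:
  "drazin_inv L = (\<lambda>X. R X - Q ** X ** Q - 2 *\<^sub>R (P ** X ** Q + Q ** X ** P))"
    (is "_ = ?D")
proof (rule drazin_inv_eqI[where k = 1])
  have L_D: "L (?D X) = Q ** X ** Q + (P ** X ** Q + Q ** X ** P) - R X" for X
    by (simp add: lindbladian_blocks matrix_mul_simps block_simps recovery_simps algebra_simps)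
  have D_L: "?D (L X) = Q ** X ** Q + (P ** X ** Q + Q ** X ** P) - R X" for X
    by (simp add: lindbladian_blocks matrix_mul_simps block_simps recovery_simps algebra_simps)
  show "?D \<circ> L \<circ> ?D = ?D"
    by (rule ext) (simp only: comp_apply L_D, simp add: matrix_mul_simps block_simps
        recovery_simps algebra_simps)
  show "L \<circ> ?D = ?D \<circ> L"
    by (simp add: fun_eq_iff L_D D_L)
  show "L ^^ Suc 1 \<circ> ?D = L ^^ 1"
    by (rule ext) (simp only: funpow_simps_right comp_apply id_apply L_D, simp add:
        lindbladian_blocks matrix_mul_simps block_simps recovery_simps algebra_simps)
qed

lemma P_inf_lindbladian: "P_inf L X = P ** X ** P + R X"
proof -
  have "P_inf L X = X - (Q ** X ** Q + (P ** X ** Q + Q ** X ** P) - R X)"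
    by (simp add: P_inf_def drazin_inv_lindbladian lindbladian_blocks matrix_mul_simps block_simps
        recovery_simps algebra_simps)
  also have "\<dots> = P ** X ** P + R X"
    by (subst (1) block_decomposition) (simp add: algebra_simps)
  finally show ?thesis .
qed

section \<open>The effective generator on the codespace\<close>

context
  fixes f :: "'l \<Rightarrow> 'n cmat"
begin

abbreviation E where "E \<equiv> recovery I (\<lambda>l. Q ** f l ** P)"

definition A where "A = (\<Sum>l\<in>I. adj (F l) ** f l)"

definition B where "B = (\<Sum>l\<in>I. adj (f l) ** F l)"

definition M where "M = (\<Sum>l\<in>I. adj (Q ** f l ** P) ** (Q ** f l ** P))"

lemma P_A: "P ** A = 0"
  and Q_A: "Q ** A = A"
  and B_P: "B ** P = 0"
  and B_Q: "B ** Q = B"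
  by (simp_all add: A_def B_def matrix_mul_simps block_simps)

lemma F_A: "l \<in> I \<Longrightarrow> F l ** A = P ** f l"
  by (simp add: A_def matrix_sum_right matrix_mul_assoc sum_F_adj_F_eq F_adj_F)

lemma B_adj_F: "l \<in> I \<Longrightarrow> B ** adj (F l) = adj (f l) ** P"
proof -
  assume l: "l \<in> I"
  have "B = adj A"
    by (simp add: A_def B_def adj_simps)
  then show ?thesis
    using arg_cong[OF F_A[OF l], of adj] by (simp add: adj_matrix_mul adj_P)
qed

lemmas A_B_eqs = P_A Q_A B_P B_Q F_A B_adj_F

lemmas A_B_simps =
  A_B_eqs A_B_eqs[THEN matrix_mul_eq_nested, simplified matrix_mul_assoc[symmetric]]

context
  fixes \<rho> :: "'n cmat"
  assumes code: "\<rho> = P ** \<rho> ** P"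
begin

lemma P_rho: "P ** \<rho> = \<rho>"
  by (subst (1 2) code) (simp add: matrix_mul_assoc P_idem)

lemma rho_P: "\<rho> ** P = \<rho>"
  by (subst (1 2) code) (simp flip: matrix_mul_assoc add: P_idem)

lemma Q_rho: "Q ** \<rho> = 0"
  by (subst code) (simp add: matrix_mul_assoc Q_P)

lemma rho_Q: "\<rho> ** Q = 0"
  by (subst code) (simp flip: matrix_mul_assoc add: P_Q)

lemma F_rho: "l \<in> I \<Longrightarrow> F l ** \<rho> = 0"
  by (subst code) (simp add: matrix_mul_assoc F_P)

lemma rho_adj_F: "l \<in> I \<Longrightarrow> \<rho> ** adj (F l) = 0"
  by (subst code) (simp flip: matrix_mul_assoc add: P_adj_F)

lemmas rho_eqs = P_rho rho_P Q_rho rho_Q F_rho rho_adj_F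

lemmas rho_simps = rho_eqs rho_eqs[THEN matrix_mul_eq_nested]

lemma recovery_rho_left: "R (\<rho> ** X) = 0"
  by (metis P_rho matrix_mul_assoc recovery_P_left)

lemma recovery_rho_right: "R (X ** \<rho>) = 0"
  by (metis rho_P matrix_mul_assoc recovery_P_right)

lemma P_inf_rho: "P_inf L \<rho> = \<rho>"
  using recovery_rho_left[of "mat 1"] code by (simp add: P_inf_lindbladian)

lemma P_inf_pertO:
  "P_inf L (pertO I F f \<rho>) =
     (\<Sum>l\<in>I. P ** f l ** \<rho> ** adj (f l) ** P
        - (1/2) *\<^sub>R (P ** adj (f l) ** f l ** \<rho> + \<rho> ** adj (f l) ** f l ** P))
     + R (E \<rho>)"
  unfolding P_inf_lindbladian pertO_def dissipator_def recovery_def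
  by (simp add: matrix_mul_simps block_simps rho_simps adj_simps adj_P adj_Q sum.distrib
      sum_subtractf scaleR_sum_right scaleR_right_diff_distrib algebra_simps)

lemma pertO1_rho: "pertO1 I F f \<rho> = - (1/2) *\<^sub>R (A ** \<rho> + \<rho> ** B)"
  unfolding pertO1_def A_def B_def
  by (simp add: matrix_mul_simps block_simps rho_simps sum.distrib sum_subtractf sum_negf
      scaleR_sum_right scaleR_right_diff_distrib algebra_simps)

lemma drazin_pertO1_rho: "drazin_inv L (pertO1 I F f \<rho>) = A ** \<rho> + \<rho> ** B"
  unfolding pertO1_rho drazin_inv_lindbladian
  by (simp add: matrix_mul_simps block_simps rho_simps recovery_simps recovery_rho_left
      recovery_rho_right A_B_simps scaleR_right_diff_distrib algebra_simps)

lemma Q_pertO1_Q: "Q ** pertO1 I F f (A ** \<rho> + \<rho> ** B) ** Q = - (A ** \<rho> ** B)"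
  unfolding pertO1_def A_def B_def
  by (simp add: matrix_mul_simps block_simps rho_simps sum.distrib sum_subtractf
      scaleR_sum_right scaleR_right_diff_distrib algebra_simps)
    (subst (3) sum.swap, simp flip: scaleR_sum_right scaleR_left_distrib)

lemma P_pertO1_P:
  "P ** pertO1 I F f (A ** \<rho> + \<rho> ** B) ** P =
     (\<Sum>l\<in>I. (P ** f l ** \<rho> ** adj (f l) ** P + P ** f l ** \<rho> ** adj (f l) ** P)
        - (1/2) *\<^sub>R (P ** adj (f l) ** P ** f l ** \<rho> + \<rho> ** adj (f l) ** P ** f l ** P))"
  unfolding pertO1_def
  by (simp add: matrix_mul_simps block_simps rho_simps A_B_simps sum.distrib sum_subtractf
      scaleR_sum_right scaleR_right_diff_distrib algebra_simps sum_distrib_left)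

lemma recovery_A_rho_B: "R (A ** \<rho> ** B) = (\<Sum>l\<in>I. P ** f l ** \<rho> ** adj (f l) ** P)"
  unfolding recovery_def
  by (simp add: matrix_mul_simps block_simps rho_simps A_B_simps)

lemma P_inf_pertO1_drazin:
  "P_inf L (pertO1 I F f (A ** \<rho> + \<rho> ** B)) =
     P ** pertO1 I F f (A ** \<rho> + \<rho> ** B) ** P - (\<Sum>l\<in>I. P ** f l ** \<rho> ** adj (f l) ** P)"
proof -
  have "R (pertO1 I F f (A ** \<rho> + \<rho> ** B)) = R (Q ** pertO1 I F f (A ** \<rho> + \<rho> ** B) ** Q)"
    by (simp only: recovery_Q_left recovery_Q_right)
  also have "\<dots> = - (\<Sum>l\<in>I. P ** f l ** \<rho> ** adj (f l) ** P)"
    by (simp only: Q_pertO1_Q recovery_uminus recovery_A_rho_B)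
  finally show ?thesis
    by (simp add: P_inf_lindbladian)
qed

lemma L_eff_rho: "L_eff I F f \<rho> = R (E \<rho>) - (1/2) *\<^sub>R (M ** \<rho> + \<rho> ** M)"
proof -
  have f_split:
    "adj (f l) ** (f l ** X) = adj (f l) ** (P ** (f l ** X)) + adj (f l) ** (Q ** (f l ** X))"
    for l X
    by (simp flip: matrix_add_ldistrib matrix_add_rdistrib add: P_plus_Q)
  show ?thesis
    unfolding L_eff_def Let_def P_inf_rho drazin_pertO1_rho P_inf_pertO P_inf_pertO1_drazin
      P_pertO1_P M_def
    by (simp add: matrix_mul_simps block_simps rho_simps adj_simps adj_P adj_Q f_split
        sum.distrib sum_subtractf sum_negf scaleR_sum_right scaleR_right_diff_distrib
        algebra_simps sum_distrib_left)
qed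

end

lemma trace_recovery_E: "trace (R (E \<sigma>)) = trace (M ** \<sigma>)"
proof -
  have "trace (R (E \<sigma>)) = trace (Q ** E \<sigma>)"
    by (simp add: trace_recovery sum_adj_F_F)
  also have "Q ** E \<sigma> = E \<sigma>"
    by (simp add: recovery_def matrix_mul_simps block_simps)
  finally show ?thesis
    by (simp add: trace_recovery M_def)
qed

lemma M_eq_cscale_P:
  assumes "\<forall>\<sigma>. \<sigma> = P ** \<sigma> ** P \<longrightarrow> R (E \<sigma>) = cscale c \<sigma>"
  shows "M = cscale c P"
proof -
  define Z where "Z = M - cscale c P"
  have "P ** M ** P = M"
    by (simp add: M_def adj_simps adj_P adj_Q matrix_mul_simps block_simps)
  then have "P ** Z ** P = Z"
    by (simp add: Z_def matrix_mul_simps block_simps)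
  then have "P ** adj Z ** P = adj Z"
    by (metis adj_P adj_matrix_mul matrix_mul_assoc)
  then have "trace (M ** adj Z) = c * trace (adj Z)"
    using assms trace_recovery_E by (metis trace_cscale)
  moreover have "P ** adj Z = adj Z"
    using \<open>P ** adj Z ** P = adj Z\<close> by (metis P_idem matrix_mul_assoc)
  ultimately have "trace (Z ** adj Z) = 0"
    by (simp add: Z_def matrix_diff_rdistrib matrix_cscale_left trace_sub trace_cscale)
  then show ?thesis
    by (simp add: Z_def trace_mul_adj_eq_0_iff)
qed

end

end

theorem mainTheorem2:
  fixes P Q :: "'n::finite cmat" and I :: "'l set" and F f :: "'l \<Rightarrow> 'n cmat"
  assumes "finite I"
    and "P ** P = P" and "adj P = P"
    and "Q = mat 1 - P"
    and "\<forall>l\<in>I. F l = P ** F l ** Q"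
    and "(\<Sum>l\<in>I. adj (F l) ** F l) = Q"
    and "\<forall>l\<in>I. F l ** mp_pinv (adj (F l) ** F l) ** adj (F l) = P"
    and "\<forall>l\<in>I. \<forall>l'\<in>I. l \<noteq> l' \<longrightarrow> F l ** adj (F l') = 0"
    and "\<forall>\<rho>. lindbladian I F \<rho> = 0 \<longleftrightarrow> \<rho> = P ** \<rho> ** P"
    and "\<forall>\<rho>. \<rho> = P ** \<rho> ** P \<longrightarrow>
           (\<exists>c. recovery I F (recovery I (\<lambda>l. Q ** f l ** P) \<rho>) = cscale c \<rho>)"
  shows "\<forall>\<rho>. \<rho> = P ** \<rho> ** P \<longrightarrow> L_eff I F f \<rho> = 0"
proof -
  interpret code_recovery P Q I F
    using assms(1-8) by unfold_locales auto
  have "\<exists>c. \<forall>\<sigma>. \<sigma> = P ** \<sigma> ** P \<longrightarrow> R (E f \<sigma>) = cscale c \<sigma>"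
    using all_eigenvectors_imp_scalar[OF P_idem _ _ assms(10)]
    by (simp add: recovery_add recovery_cscale)
  then obtain c where c: "\<forall>\<sigma>. \<sigma> = P ** \<sigma> ** P \<longrightarrow> R (E f \<sigma>) = cscale c \<sigma>"
    by blast
  have "M f = cscale c P"
    using M_eq_cscale_P[OF c] .
  show ?thesis
  proof (intro allI impI)
    fix \<rho> assume \<rho>: "\<rho> = P ** \<rho> ** P"
    have "L_eff I F f \<rho> = cscale c \<rho> - (1/2) *\<^sub>R (cscale c \<rho> + cscale c \<rho>)"
      using c \<rho> \<open>M f = cscale c P\<close>
      by (simp add: L_eff_rho[OF \<rho>] P_rho[OF \<rho>] rho_P[OF \<rho>]
          matrix_cscale_left matrix_cscale_right)
    then show "L_eff I F f \<rho> = 0"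
      by (simp flip: scaleR_2)
  qed
qed

end
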